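(* Let $G$ be a group with identity $e$, $A$ a finite set with $|A|\ge2$, and $S\subseteq G$ a finite subset with $e\in S$ and $|S|\ge3$. Suppose $(\mathcal P,f)$ generates a local map $\mu:A^S\to A$, with $f$ well-behaved and $|\mathcal P|=|A|$. Then $\mathrm{mms}(\mu)=S\setminus\{s\}$ for some $s\in S\setminus\{e\}$, or $\mathrm{mms}(\mu)=S$.
   Context: $A^S$ is the set of functions $S\to A$. A local map $\mu:A^S\to A$ defines the cellular automaton $\tau:A^G\to A^G$, $\tau(x)(g)=\mu((g^{-1}\cdot x)|_S)$, where $(g\cdot x)(h)=x(g^{-1}h)$. A finite $T\subseteq G$ is a memory set of $\tau$ if some local map $A^T\to A$ defines $\tau$; $\mathrm{mms}(\mu)$ is the intersection of all memory sets of the cellular automaton defined by $\mu$. The pair $(\mathcal P,f)$ generates $\mu$ if $\mathcal P=\{z\in A^S:\mu(z)\neq z(e)\}$ and $f:\mathcal P\to A$ is the restriction of $\mu$ to $\mathcal P$. The function $f$ is well-behaved if for all $p,q\in\mathcal P$: $p(e)=q(e)$ if and only if $f(p)=f(q)$. *)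

theory Defs
  imports "HOL-Library.FuncSet" "HOL-Library.Cardinality"
begin

text \<open>The group G is a type of class group_add (written additively:
  identity 0, product g + h, inverse -g; commutativity is NOT assumed).
  An element of A^S is a function 'g => 'a that is undefined outside S
  (extensional functions, PiE S UNIV); x|_S is restrict x S.\<close>

definition shift :: "'g::group_add \<Rightarrow> ('g \<Rightarrow> 'a) \<Rightarrow> ('g \<Rightarrow> 'a)" where
  "shift g x = (\<lambda>h. x (- g + h))"

definition ca :: "'g::group_add set \<Rightarrow> (('g \<Rightarrow> 'a) \<Rightarrow> 'a) \<Rightarrow> ('g \<Rightarrow> 'a) \<Rightarrow> ('g \<Rightarrow> 'a)" where
  "ca S mu x = (\<lambda>g. mu (restrict (shift (- g) x) S))"

definition memory_set :: "(('g::group_add \<Rightarrow> 'a) \<Rightarrow> ('g \<Rightarrow> 'a)) \<Rightarrow> 'g set \<Rightarrow> bool" where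
  "memory_set tau T \<longleftrightarrow> finite T \<and> (\<exists>nu. tau = ca T nu)"

definition mms :: "'g::group_add set \<Rightarrow> (('g \<Rightarrow> 'a) \<Rightarrow> 'a) \<Rightarrow> 'g set" where
  "mms S mu = \<Inter> {T. memory_set (ca S mu) T}"

definition generates ::
  "'g::group_add set \<Rightarrow> (('g \<Rightarrow> 'a) \<Rightarrow> 'a) \<Rightarrow> ('g \<Rightarrow> 'a) set \<Rightarrow> (('g \<Rightarrow> 'a) \<Rightarrow> 'a) \<Rightarrow> bool" where
  "generates S mu P f \<longleftrightarrow>
     P = {z \<in> S \<rightarrow>\<^sub>E (UNIV :: 'a set). mu z \<noteq> z 0} \<and> (\<forall>p\<in>P. f p = mu p)"

definition well_behaved :: "('g::group_add \<Rightarrow> 'a) set \<Rightarrow> (('g \<Rightarrow> 'a) \<Rightarrow> 'a) \<Rightarrow> bool" where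
  "well_behaved P f \<longleftrightarrow> (\<forall>p\<in>P. \<forall>q\<in>P. p 0 = q 0 \<longleftrightarrow> f p = f q)"

end

theory Submission
  imports Defs
begin

text \<open>Since \<open>\<P> = {z. \<mu> z \<noteq> z(e)}\<close>, every coordinate on which \<open>\<mu>\<close> does not depend
  can be varied freely inside \<open>\<P>\<close>. If \<open>\<mu>\<close> ignored \<open>e\<close>, then for each value of
  \<open>z\<close> on two further cells one could choose \<open>z(e)\<close> different from \<open>\<mu> z\<close>; if \<open>\<mu>\<close>
  ignored two cells \<open>s \<noteq> t\<close> other than \<open>e\<close>, one could vary them in any element of
  \<open>\<P>\<close>. Either way \<open>\<P>\<close> realises all \<open>|A|\<^sup>2 > |A|\<close> pairs of values at two cells,
  contradicting \<open>|\<P>| = |A|\<close>. So \<open>\<mu>\<close> depends on all of \<open>S\<close> except at most one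
  \<open>s \<noteq> e\<close>, and every cell \<open>\<mu>\<close> depends on lies in every memory set.\<close>

definition depends_on :: "'g::group_add set \<Rightarrow> (('g \<Rightarrow> 'a) \<Rightarrow> 'a) \<Rightarrow> 'g \<Rightarrow> bool" where
  "depends_on S mu s \<longleftrightarrow> (\<exists>z \<in> S \<rightarrow>\<^sub>E (UNIV :: 'a set). \<exists>a. mu (z(s := a)) \<noteq> mu z)"

lemma fun_upd_in_PiE_UNIV:
  "s \<in> S \<Longrightarrow> z \<in> S \<rightarrow>\<^sub>E (UNIV :: 'a set) \<Longrightarrow> z(s := a) \<in> S \<rightarrow>\<^sub>E (UNIV :: 'a set)"
  using PiE_fun_upd[of a "\<lambda>_. UNIV" s z S] by (simp add: insert_absorb)

lemma ex_neq_if_CARD_ge_2: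
  fixes w :: "'a::finite"
  assumes "CARD('a) \<ge> 2"
  obtains v where "v \<noteq> w"
proof -
  have "UNIV \<noteq> {w}"
  proof
    assume "UNIV = {w}"
    then have "CARD('a) = card {w}" by (simp only:)
    with assms show False by simp
  qed
  with that show ?thesis by blast
qed

lemma ca_apply_zero: "ca S mu x 0 = mu (restrict x S)"
  by (simp add: ca_def shift_def)

lemma mms_subset: "finite S \<Longrightarrow> mms S mu \<subseteq> S"
  unfolding mms_def memory_set_def by blast

lemma depends_on_imp_mem_mms:
  fixes S :: "'g::group_add set" and mu :: "('g \<Rightarrow> 'a) \<Rightarrow> 'a"
  assumes "s \<in> S" and "depends_on S mu s"
  shows "s \<in> mms S mu"
  unfolding mms_def
proof (rule InterI)
  obtain z a where z: "z \<in> S \<rightarrow>\<^sub>E UNIV" and changes: "mu (z(s := a)) \<noteq> mu z"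
    using assms(2) unfolding depends_on_def by blast
  fix T assume "T \<in> {T. memory_set (ca S mu) T}"
  then obtain nu where nu: "ca S mu = ca T nu" by (auto simp: memory_set_def)
  show "s \<in> T"
  proof (rule ccontr)
    assume "s \<notin> T"
    then have "restrict (z(s := a)) T = restrict z T"
      by (auto simp: restrict_def)
    then have "ca T nu (z(s := a)) 0 = ca T nu z 0"
      by (simp only: ca_apply_zero)
    then have "mu (restrict (z(s := a)) S) = mu (restrict z S)"
      by (simp only: nu flip: ca_apply_zero)
    then have "mu (z(s := a)) = mu z"
      using PiE_restrict[OF fun_upd_in_PiE_UNIV[OF assms(1) z]] PiE_restrict[OF z] by simp
    with changes show False ..
  qed
qed

lemma mem_generated_iff:
  "generates S mu P f \<Longrightarrow> p \<in> P \<longleftrightarrow> p \<in> S \<rightarrow>\<^sub>E UNIV \<and> mu p \<noteq> p 0"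
  by (simp add: generates_def)

lemma finite_generated:
  fixes S :: "'g::group_add set" and mu :: "('g \<Rightarrow> 'a::finite) \<Rightarrow> 'a"
  assumes "finite S" and "generates S mu P f"
  shows "finite P"
proof (rule finite_subset)
  show "P \<subseteq> S \<rightarrow>\<^sub>E UNIV"
    using mem_generated_iff[OF assms(2)] by blast
  show "finite (S \<rightarrow>\<^sub>E (UNIV :: 'a set))"
    using assms(1) by (simp add: finite_PiE)
qed

lemma CARD_less_card_if_pairs_attained:
  fixes P :: "('i \<Rightarrow> 'a::finite) set"
  assumes "finite P" and "CARD('a) \<ge> 2"
    and "\<And>a b. \<exists>p \<in> P. p s = a \<and> p t = b"
  shows "CARD('a) < card P"
proof -
  have "UNIV \<subseteq> (\<lambda>p. (p s, p t)) ` P"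
  proof
    fix ab :: "'a \<times> 'a"
    obtain p where "p \<in> P" "p s = fst ab" "p t = snd ab"
      using assms(3) by blast
    then show "ab \<in> (\<lambda>p. (p s, p t)) ` P"
      by force
  qed
  then have "CARD('a \<times> 'a) \<le> card P"
    by (rule surj_card_le[OF assms(1)])
  moreover have "CARD('a) * 1 < CARD('a) * CARD('a)"
    using assms(2) by (intro mult_strict_left_mono) auto
  ultimately show ?thesis
    by (simp only: card_prod mult_1_right)
qed

lemma depends_on_zero:
  fixes S :: "'g::group_add set" and mu :: "('g \<Rightarrow> 'a::finite) \<Rightarrow> 'a"
  assumes "CARD('a) \<ge> 2" and "finite S" and "0 \<in> S"
    and "t1 \<in> S" "t2 \<in> S" "t1 \<noteq> 0" "t2 \<noteq> 0" "t1 \<noteq> t2"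
    and gen: "generates S mu P f" and "card P = CARD('a)"
  shows "depends_on S mu 0"
proof (rule ccontr)
  assume "\<not> depends_on S mu 0"
  then have ignores_zero: "mu (z(0 := v)) = mu z" if "z \<in> S \<rightarrow>\<^sub>E UNIV" for z v
    using that unfolding depends_on_def by blast
  have "\<exists>p \<in> P. p t1 = a \<and> p t2 = b" for a b
  proof -
    define z where "z = restrict (\<lambda>x. if x = t1 then a else b) S"
    have z: "z \<in> S \<rightarrow>\<^sub>E UNIV" by (simp add: z_def)
    obtain v where "v \<noteq> mu z" using ex_neq_if_CARD_ge_2[OF assms(1)] .
    then have "z(0 := v) \<in> P"
      using mem_generated_iff[OF gen] fun_upd_in_PiE_UNIV[OF assms(3) z] ignores_zero[OF z]
      by simp
    then show ?thesis
      using assms(4-8) by (intro bexI[of _ "z(0 := v)"]) (auto simp: z_def)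
  qed
  then have "CARD('a) < card P"
    by (rule CARD_less_card_if_pairs_attained[OF finite_generated[OF assms(2) gen] assms(1)])
  with assms(10) show False by simp
qed

lemma depends_on_if_other_ignored:
  fixes S :: "'g::group_add set" and mu :: "('g \<Rightarrow> 'a::finite) \<Rightarrow> 'a"
  assumes "CARD('a) \<ge> 2" and "finite S"
    and "s \<in> S" "t \<in> S" "s \<noteq> 0" "t \<noteq> 0" "s \<noteq> t"
    and gen: "generates S mu P f" and "card P = CARD('a)"
    and "\<not> depends_on S mu s"
  shows "depends_on S mu t"
proof (rule ccontr)
  assume "\<not> depends_on S mu t"
  with assms(10) have ignores: "mu (z(u := v)) = mu z"
    if "z \<in> S \<rightarrow>\<^sub>E UNIV" "u \<in> {s, t}" for z u v
    using that unfolding depends_on_def by blast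
  from assms(1,9) obtain p where p: "p \<in> P"
    by (metis card.empty equals0I not_numeral_le_zero)
  have "p(s := a, t := b) \<in> P" for a b
  proof -
    have p_ext: "p \<in> S \<rightarrow>\<^sub>E UNIV" and "mu p \<noteq> p 0"
      using p mem_generated_iff[OF gen] by auto
    moreover have "p(s := a) \<in> S \<rightarrow>\<^sub>E UNIV"
      using fun_upd_in_PiE_UNIV[OF assms(3) p_ext] .
    moreover note fun_upd_in_PiE_UNIV[OF assms(4) this, of b]
    ultimately show ?thesis
      using assms(5,6) ignores mem_generated_iff[OF gen] by simp
  qed
  then have "\<exists>q \<in> P. q s = a \<and> q t = b" for a b
    using assms(7) by (intro bexI[of _ "p(s := a, t := b)"]) auto
  then have "CARD('a) < card P"
    by (rule CARD_less_card_if_pairs_attained[OF finite_generated[OF assms(2) gen] assms(1)])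
  with assms(9) show False by simp
qed

theorem mainTheorem10:
  fixes S :: "'g::group_add set"
    and mu :: "('g \<Rightarrow> 'a::finite) \<Rightarrow> 'a"
    and P :: "('g \<Rightarrow> 'a) set"
    and f :: "('g \<Rightarrow> 'a) \<Rightarrow> 'a"
  assumes "CARD('a) \<ge> 2"
    and "finite S" and "0 \<in> S" and "card S \<ge> 3"
    and "generates S mu P f"
    and "well_behaved P f"
    and "card P = CARD('a)"
  shows "(\<exists>s \<in> S - {0}. mms S mu = S - {s}) \<or> mms S mu = S"
proof -
  have "\<not> card (S - {0}) \<le> Suc 0"
    using assms(2-4) by simp
  then obtain t1 t2 where "t1 \<in> S - {0}" "t2 \<in> S - {0}" "t1 \<noteq> t2"
    using card_le_Suc0_iff_eq[of "S - {0}"] assms(2) by blast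
  then have "depends_on S mu 0"
    by (intro depends_on_zero[OF assms(1-3) _ _ _ _ _ assms(5,7)]) auto
  have mms_contains_rest: "S - {s} \<subseteq> mms S mu" if "s \<in> S - {0}" "\<not> depends_on S mu s" for s
  proof
    fix t assume "t \<in> S - {s}"
    with that \<open>depends_on S mu 0\<close> have "depends_on S mu t"
      using depends_on_if_other_ignored[OF assms(1,2) _ _ _ _ _ assms(5,7)] by (cases "t = 0") auto
    with \<open>t \<in> S - {s}\<close> show "t \<in> mms S mu"
      using depends_on_imp_mem_mms by blast
  qed
  show ?thesis
  proof (cases "\<forall>s \<in> S. depends_on S mu s")
    case True
    then show ?thesis
      using depends_on_imp_mem_mms mms_subset[OF assms(2)] by blast
  next
    case False
    with \<open>depends_on S mu 0\<close> obtain s where "s \<in> S - {0}" "\<not> depends_on S mu s" by blast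
    then show ?thesis
      using mms_contains_rest mms_subset[OF assms(2)] by blast
  qed
qed

end
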